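(* Let $(\alpha,\beta)\in Q$, let $x^*=\lim_kx_k$ for the GAFS sequence, and let $N=\{i: x^*_i=0\}$, $B=\{i: x^*_i>0\}$. There exist $\delta>0$ and $R>0$ such that for each $k\ge0$ $$\frac{c^Tx_k-c^Tx^*}{\|x_k-x^*\|}\ge\frac1R,\qquad \frac{c^Tx_k-c^Tx^*}{\sum_{i\in N}(x_k)_i}\ge\delta,\qquad \frac{c^Tx_k-c^Tx^*}{\sum_{i\in B}|(x_k)_i-x^*_i|}\ge\delta.$$
   Context: Let $A\in\mathbb{R}^{m\times n}$ have rank $m$, $b\in\mathbb{R}^m$, $c\in\mathbb{R}^n$. Primal LP: $\min c^Tx$ s.t. $Ax=b$, $x\ge 0$. Standing assumptions: the primal has a strictly positive feasible point; $c^Tx$ is not constant on the primal feasible region; the LP has an optimal solution. For $u\in\mathbb{R}^n$, $\gamma(u)=\max\{u_i: u_i>0\}$; $\|\cdot\|$ Euclidean norm. For $x>0$, $X=\mathrm{diag}(x)$. GAFS sequence: fix $\alpha\in(0,1)$, $\beta\in[0,1)$, and $x_0>0$ with $Ax_0=b$. For $k\ge0$ let $X_k=\mathrm{diag}(x_k)$, $y_k=(AX_k^2A^T)^{-1}AX_k^2c$, $s_k=c-A^Ty_k$. Set $x_1=x_0-\alpha\frac{X_0^2s_0}{\gamma(X_0s_0)}$ and, for $k\ge1$, $x_{k+1}=x_k-\alpha\frac{X_k^2s_k}{\gamma(X_ks_k)}+\beta\frac{x_k-x_{k-1}}{\|X_k^{-1}(x_k-x_{k-1})\|_\infty}$ (all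 quantities assumed well defined). $Q=\{(\alpha,\beta): 0<\alpha<1,\ 0\le\beta<1/\phi,\ \alpha+\beta\le 2/3\}$ with $\phi=(1+\sqrt5)/2$. *)

theory Defs
  imports "HOL-Analysis.Analysis"
begin

text \<open>Vectors in R^n are real^'n, the m x n matrix A is real^'n^'m.\<close>

definition diagv :: "real^'n \<Rightarrow> real^'n^'n" where
  "diagv x = (\<chi> i j. if i = j then x $ i else 0)"

definition lp_feasible :: "real^'n^'m \<Rightarrow> real^'m \<Rightarrow> real^'n \<Rightarrow> bool" where
  "lp_feasible A b x \<longleftrightarrow> A *v x = b \<and> (\<forall>i. 0 \<le> x $ i)"

definition lp_standing :: "real^'n^'m \<Rightarrow> real^'m \<Rightarrow> real^'n \<Rightarrow> bool" where
  "lp_standing A b c \<longleftrightarrow>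
     rank A = CARD('m) \<and>
     (\<exists>x. A *v x = b \<and> (\<forall>i. 0 < x $ i)) \<and>
     (\<exists>x y. lp_feasible A b x \<and> lp_feasible A b y \<and> c \<bullet> x \<noteq> c \<bullet> y) \<and>
     (\<exists>x. lp_feasible A b x \<and> (\<forall>y. lp_feasible A b y \<longrightarrow> c \<bullet> x \<le> c \<bullet> y))"

definition gam :: "real^'n \<Rightarrow> real" where
  "gam u = Max {u $ i | i. 0 < u $ i}"

definition dual_y :: "real^'n^'m \<Rightarrow> real^'n \<Rightarrow> real^'n \<Rightarrow> real^'m" where
  "dual_y A c x = matrix_inv (A ** diagv x ** diagv x ** transpose A) *v (A ** diagv x ** diagv x *v c)"

definition slack :: "real^'n^'m \<Rightarrow> real^'n \<Rightarrow> real^'n \<Rightarrow> real^'n" where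
  "slack A c x = c - transpose A *v dual_y A c x"

definition as_step :: "real^'n^'m \<Rightarrow> real^'n \<Rightarrow> real \<Rightarrow> real^'n \<Rightarrow> real^'n" where
  "as_step A c \<alpha> x = (\<alpha> / gam (diagv x *v slack A c x)) *\<^sub>R (diagv x ** diagv x *v slack A c x)"

fun gafs :: "real^'n^'m \<Rightarrow> real^'n \<Rightarrow> real \<Rightarrow> real \<Rightarrow> real^'n \<Rightarrow> nat \<Rightarrow> real^'n" where
  "gafs A c \<alpha> \<beta> x0 0 = x0"
| "gafs A c \<alpha> \<beta> x0 (Suc 0) = x0 - as_step A c \<alpha> x0"
| "gafs A c \<alpha> \<beta> x0 (Suc (Suc k)) =
     (let xp = gafs A c \<alpha> \<beta> x0 k; xk = gafs A c \<alpha> \<beta> x0 (Suc k) in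
       xk - as_step A c \<alpha> xk
          + (\<beta> / infnorm (matrix_inv (diagv xk) *v (xk - xp))) *\<^sub>R (xk - xp))"

definition golden :: real where "golden = (1 + sqrt 5) / 2"

definition Qset :: "(real \<times> real) set" where
  "Qset = {(\<alpha>, \<beta>). 0 < \<alpha> \<and> \<alpha> < 1 \<and> 0 \<le> \<beta> \<and> \<beta> < 1 / golden \<and> \<alpha> + \<beta> \<le> 2 / 3}"

end

theory Submission imports Defs begin

text \<open>Every GAFS step is a fixed-angle descent step. The affine-scaling direction u = X^2 s
  lies in ker A and, after rescaling by the positive weights 1/x_i^2, represents c on ker A.
  By compactness of the unit sphere of ker A, every such u satisfies ||u|| <= M c'u with M
  independent of the weights. The momentum term is a nonnegative multiple of the previous
  step, so by induction ||x_(k+1) - x_k|| <= M (c'x_k - c'x_(k+1)); telescoping and passing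
  to the limit gives ||x_k - x*|| <= M (c'x_k - c'x*). The coordinate bounds follow
  because x*_i = 0 on N.\<close>

lemma matrix_inv_right:
  assumes "invertible A"
  shows "A ** matrix_inv A = mat 1"
  using assms unfolding invertible_def matrix_inv_def by (rule someI2_ex) auto

lemma diagv_mult_vector: "diagv x *v v = x * v"
proof -
  have "(\<Sum>j\<in>UNIV. (if i = j then x$i else 0) * v$j) = (\<Sum>j\<in>UNIV. if i = j then x$i * v$j else 0)" for i
    by (rule sum.cong) auto
  thus ?thesis by (simp add: diagv_def matrix_vector_mult_def times_vec_def vec_eq_iff)
qed

lemma diagv_sq_mult_vector: "(diagv x ** diagv x) *v v = x * (x * v)"
  by (simp add: matrix_vector_mul_assoc[symmetric] diagv_mult_vector)

lemma gram_diagv_invertible: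
  fixes A :: "real^'n^'m"
  assumes rank: "rank A = CARD('m)" and x: "\<forall>i. 0 < x$i"
  shows "invertible (A ** diagv x ** diagv x ** transpose A)"
proof -
  have inj: "inj ((*v) (transpose A))"
    using rank rank_transpose[of A] full_rank_injective[of "transpose A"] by simp
  have "z = 0" if z: "(A ** diagv x ** diagv x ** transpose A) *v z = 0" for z
  proof -
    define t where "t = transpose A *v z"
    have "0 = z \<bullet> (A *v ((diagv x ** diagv x) *v t))"
      using z by (simp add: t_def matrix_vector_mul_assoc[symmetric] matrix_mul_assoc)
    also have "\<dots> = t \<bullet> ((diagv x ** diagv x) *v t)"
      by (simp add: t_def dot_lmul_matrix transpose_matrix_vector)
    also have "\<dots> = (\<Sum>i\<in>UNIV. (x$i * t$i)\<^sup>2)"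
      by (simp add: diagv_sq_mult_vector inner_vec_def times_vec_def power2_eq_square mult_ac)
    finally have "\<forall>i. (x$i * t$i)\<^sup>2 = 0"
      by (simp add: sum_nonneg_eq_0_iff)
    hence "t = 0" using x by (simp add: vec_eq_iff) (metis order_less_irrefl)
    thus "z = 0" using inj unfolding t_def by (metis inj_eq matrix_vector_mult_0_right)
  qed
  thus ?thesis by (simp add: invertible_left_inverse matrix_left_invertible_ker)
qed

text \<open>For x > 0 the affine-scaling direction u = X^2 s(x) is of this form with weights
  p_i = 1/x_i^2, since then p * u = s(x).\<close>
definition rescaled_reduced_cost :: "real^'n^'m \<Rightarrow> real^'n \<Rightarrow> real^'n \<Rightarrow> real^'n \<Rightarrow> bool" where
  "rescaled_reduced_cost A c p u \<longleftrightarrow>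
     A *v u = 0 \<and> (\<forall>w. A *v w = 0 \<longrightarrow> c \<bullet> w = (p * u) \<bullet> w)"

lemma rescaled_reduced_cost_slack:
  fixes A :: "real^'n^'m"
  assumes rank: "rank A = CARD('m)" and x: "\<forall>i. 0 < x$i"
  shows "rescaled_reduced_cost A c (\<chi> i. 1 / (x$i)\<^sup>2) ((diagv x ** diagv x) *v slack A c x)"
proof -
  let ?G = "A ** diagv x ** diagv x ** transpose A"
  let ?r = "(A ** diagv x ** diagv x) *v c"
  have "?G ** matrix_inv ?G = mat 1"
    using matrix_inv_right[OF gram_diagv_invertible[OF rank x]] .
  hence "?G *v (matrix_inv ?G *v ?r) = ?r"
    by (subst matrix_vector_mul_assoc) (simp only: matrix_vector_mul_lid)
  moreover have "A *v ((diagv x ** diagv x) *v slack A c x) = ?r - ?G *v (matrix_inv ?G *v ?r)"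
    unfolding slack_def dual_y_def
    by (simp only: matrix_vector_mult_diff_distrib matrix_vector_mul_assoc matrix_mul_assoc)
  ultimately have null: "A *v ((diagv x ** diagv x) *v slack A c x) = 0" by simp
  have weights: "(\<chi> i. 1 / (x$i)\<^sup>2) * ((diagv x ** diagv x) *v slack A c x) = slack A c x"
    using x by (simp add: diagv_sq_mult_vector times_vec_def vec_eq_iff field_simps power2_eq_square)
      (metis less_irrefl)
  have "c \<bullet> w = slack A c x \<bullet> w" if "A *v w = 0" for w
    using that by (simp add: slack_def inner_diff_left dot_lmul_matrix)
  with null weights show ?thesis
    unfolding rescaled_reduced_cost_def by simp
qed

lemma rescaled_reduced_cost_inner_pos:
  assumes u: "rescaled_reduced_cost A c p u" and p: "\<forall>i. 0 < p$i"
    and v: "A *v v = 0" "v \<noteq> 0" and sign: "\<forall>i. v$i \<noteq> 0 \<longrightarrow> 0 < u$i * v$i"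
  shows "0 < c \<bullet> v"
proof -
  obtain j where j: "v$j \<noteq> 0" using v(2) by (metis vec_eq_iff zero_index)
  have terms: "0 \<le> p$i * (u$i * v$i)" for i
    using p sign by (cases "v$i = 0") (auto intro: less_imp_le)
  have "c \<bullet> v = (\<Sum>i\<in>UNIV. p$i * (u$i * v$i))"
    using u v(1) by (simp add: rescaled_reduced_cost_def inner_vec_def times_vec_def mult.assoc)
  also have "\<dots> > 0"
    using terms p sign j by (intro sum_pos2[where i=j]) auto
  finally show ?thesis .
qed

lemma sign_compatible_near:
  fixes v :: "real^'n"
  assumes "v \<noteq> 0"
  shows "\<exists>e>0. \<forall>y. dist y v < e \<longrightarrow> (\<forall>i. v$i \<noteq> 0 \<longrightarrow> 0 < y$i * v$i)"
proof -
  define e where "e = Min {\<bar>v$i\<bar> | i. v$i \<noteq> 0}"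
  have ne: "{\<bar>v$i\<bar> | i. v$i \<noteq> 0} \<noteq> {}"
    using assms by (auto simp: vec_eq_iff)
  have "0 < e" unfolding e_def using ne by (subst Min_gr_iff) auto
  moreover have "0 < y$i * v$i" if "dist y v < e" "v$i \<noteq> 0" for y i
  proof -
    have "\<bar>y$i - v$i\<bar> < \<bar>v$i\<bar>"
    proof -
      have "\<bar>y$i - v$i\<bar> \<le> dist y v"
        using component_le_norm_cart[of "y - v" i] by (simp add: dist_norm)
      also have "\<dots> < e" by fact
      also have "e \<le> \<bar>v$i\<bar>" unfolding e_def using that(2) by (intro Min_le) auto
      finally show ?thesis .
    qed
    thus ?thesis by (cases "v$i > 0") (auto simp: abs_if zero_less_mult_iff split: if_splits)
  qed
  ultimately show ?thesis by blast
qed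

text \<open>The bound is uniform in the weights p: the minimum of c'v over the closure of the
  normalised representers is positive, since near any limit point v the representers are
  sign-compatible with v.\<close>
lemma rescaled_reduced_cost_norm_bound:
  fixes A :: "real^'n^'m" and c :: "real^'n"
  shows "\<exists>M>0. \<forall>p u. (\<forall>i. 0 < p$i) \<longrightarrow> rescaled_reduced_cost A c p u \<longrightarrow> norm u \<le> M * (c \<bullet> u)"
proof -
  define S where "S = {u /\<^sub>R norm u | u. u \<noteq> 0 \<and> (\<exists>p. (\<forall>i. 0 < p$i) \<and> rescaled_reduced_cost A c p u)}"
  have S_sub: "S \<subseteq> sphere 0 1 \<inter> {v. A *v v = 0}"
    by (auto simp: S_def rescaled_reduced_cost_def matrix_vector_mult_scaleR)
  moreover have "closed (sphere 0 1 \<inter> {v :: real^'n. A *v v = 0})"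
    using linear_continuous_on[OF matrix_vector_mul_bounded_linear[of A]]
    by (intro closed_Int closed_sphere closed_Collect_eq) auto
  ultimately have closure_S: "closure S \<subseteq> sphere 0 1 \<inter> {v. A *v v = 0}"
    by (rule closure_minimal)
  have pos: "0 < c \<bullet> v" if v_closure: "v \<in> closure S" for v
  proof -
    have v: "A *v v = 0" "v \<noteq> 0" using closure_S v_closure by auto
    obtain e where e: "e > 0" "\<forall>y. dist y v < e \<longrightarrow> (\<forall>i. v$i \<noteq> 0 \<longrightarrow> 0 < y$i * v$i)"
      using sign_compatible_near[OF v(2)] by blast
    obtain y where y: "y \<in> S" "dist y v < e"
      using v_closure e(1) unfolding closure_approachable by blast
    then obtain u p where u: "u \<noteq> 0" "\<forall>i. 0 < p$i" "rescaled_reduced_cost A c p u"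
      and y_def: "y = u /\<^sub>R norm u"
      unfolding S_def by blast
    have "0 < u$i * v$i" if "v$i \<noteq> 0" for i
    proof -
      have "0 < (u /\<^sub>R norm u)$i * v$i"
        using e(2) y(2) that unfolding y_def by blast
      hence "0 < (u$i * v$i) / norm u" by (simp add: divide_inverse_commute)
      thus ?thesis using u(1) by (simp add: zero_less_divide_iff)
    qed
    thus ?thesis using rescaled_reduced_cost_inner_pos[OF u(3,2) v] by blast
  qed
  show ?thesis
  proof (cases "S = {}")
    case True
    hence "u = 0" if "\<forall>i. 0 < p$i" "rescaled_reduced_cost A c p u" for p u
      using that unfolding S_def by blast
    thus ?thesis by (intro exI[of _ 1] conjI allI impI) force+
  next
    case False
    have "compact (closure S)"
      using S_sub bounded_subset[OF bounded_sphere] by (simp add: le_inf_iff)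
      blast
    moreover have "closure S \<noteq> {}" using False by simp
    moreover have "continuous_on (closure S) (\<lambda>v. c \<bullet> v)" by (intro continuous_intros)
    ultimately have "\<exists>v0\<in>closure S. \<forall>v\<in>closure S. c \<bullet> v0 \<le> c \<bullet> v"
      by (rule continuous_attains_inf)
    then obtain v0 where v0: "v0 \<in> closure S" "\<And>v. v \<in> closure S \<Longrightarrow> c \<bullet> v0 \<le> c \<bullet> v"
      by blast
    have m: "0 < c \<bullet> v0" using pos[OF v0(1)] .
    have "norm u \<le> (1 / (c \<bullet> v0)) * (c \<bullet> u)"
      if "\<forall>i. 0 < p$i" "rescaled_reduced_cost A c p u" for p u
    proof (cases "u = 0")
      case False
      hence "u /\<^sub>R norm u \<in> S" using that unfolding S_def by blast
      hence "u /\<^sub>R norm u \<in> closure S" using closure_subset by blast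
      hence "c \<bullet> v0 \<le> c \<bullet> (u /\<^sub>R norm u)" by (rule v0(2))
      hence "c \<bullet> v0 * norm u \<le> c \<bullet> u" using False by (simp add: field_simps)
      thus ?thesis using m by (simp add: field_simps)
    qed simp
    thus ?thesis using m by (intro exI[of _ "1 / (c \<bullet> v0)"]) auto
  qed
qed

lemma gam_pos: "\<exists>i. 0 < u$i \<Longrightarrow> 0 < gam u"
  unfolding gam_def by (subst Max_gr_iff) auto

lemma as_step_norm_bound:
  fixes A :: "real^'n^'m"
  assumes rank: "rank A = CARD('m)"
  obtains M where "M > 0"
    "\<And>\<alpha> x. 0 \<le> \<alpha> \<Longrightarrow> \<forall>i. 0 < x$i \<Longrightarrow> \<exists>i. 0 < (diagv x *v slack A c x)$i \<Longrightarrow>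
       norm (as_step A c \<alpha> x) \<le> M * (c \<bullet> as_step A c \<alpha> x)"
proof -
  obtain M where M: "M > 0"
    "\<And>p u. \<forall>i. 0 < p$i \<Longrightarrow> rescaled_reduced_cost A c p u \<Longrightarrow> norm u \<le> M * (c \<bullet> u)"
    using rescaled_reduced_cost_norm_bound[of A c] by blast
  have "norm (as_step A c \<alpha> x) \<le> M * (c \<bullet> as_step A c \<alpha> x)"
    if "0 \<le> \<alpha>" "\<forall>i. 0 < x$i" "\<exists>i. 0 < (diagv x *v slack A c x)$i" for \<alpha> x
  proof -
    let ?u = "(diagv x ** diagv x) *v slack A c x"
    define r where "r = \<alpha> / gam (diagv x *v slack A c x)"
    have r: "0 \<le> r"
      unfolding r_def using that(1) gam_pos[OF that(3)] by simp
    have "\<forall>i. 0 < (\<chi> i. 1 / (x$i)\<^sup>2) $ i" using that(2) by simp (metis less_irrefl)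
    hence u: "norm ?u \<le> M * (c \<bullet> ?u)"
      using M(2) rescaled_reduced_cost_slack[OF rank that(2)] by blast
    have "norm (as_step A c \<alpha> x) = r * norm ?u"
      by (simp add: as_step_def r_def[symmetric] abs_of_nonneg[OF r])
    also have "\<dots> \<le> r * (M * (c \<bullet> ?u))"
      using u r by (rule mult_left_mono)
    also have "\<dots> = M * (c \<bullet> as_step A c \<alpha> x)"
      by (simp add: as_step_def r_def[symmetric])
    finally show ?thesis .
  qed
  thus ?thesis using that M(1) by blast
qed

lemma momentum_descent_step_bound:
  fixes X d :: "nat \<Rightarrow> 'a::real_inner"
  assumes first: "X 1 = X 0 - d 0"
    and step: "\<And>k. \<exists>t\<ge>0. X (Suc (Suc k)) = X (Suc k) - d (Suc k) + t *\<^sub>R (X (Suc k) - X k)"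
    and d: "\<And>k. norm (d k) \<le> M * (c \<bullet> d k)"
  shows "norm (X (Suc k) - X k) \<le> M * (c \<bullet> X k - c \<bullet> X (Suc k))"
proof (induction k)
  case 0
  then show ?case using first d[of 0] by (simp add: inner_diff_right)
next
  case (Suc k)
  obtain t where t: "t \<ge> 0"
    and eq: "X (Suc (Suc k)) - X (Suc k) = t *\<^sub>R (X (Suc k) - X k) - d (Suc k)"
    using step[of k] by (auto simp: algebra_simps)
  have "norm (X (Suc (Suc k)) - X (Suc k)) \<le> t * norm (X (Suc k) - X k) + norm (d (Suc k))"
    unfolding eq using t norm_triangle_ineq4[of "t *\<^sub>R (X (Suc k) - X k)" "d (Suc k)"] by simp
  also have "\<dots> \<le> t * (M * (c \<bullet> X k - c \<bullet> X (Suc k))) + M * (c \<bullet> d (Suc k))"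
    using Suc d[of "Suc k"] t by (intro add_mono mult_left_mono) auto
  also have "\<dots> = M * (c \<bullet> X (Suc k) - c \<bullet> X (Suc (Suc k)))"
  proof -
    have "c \<bullet> d (Suc k) = t * (c \<bullet> X (Suc k) - c \<bullet> X k) - (c \<bullet> X (Suc (Suc k)) - c \<bullet> X (Suc k))"
      using arg_cong[OF eq, of "inner c"] by (simp add: inner_diff_right)
    thus ?thesis by (simp only:) (simp add: algebra_simps)
  qed
  finally show ?case .
qed

lemma limit_dist_le_of_step_bound:
  fixes X :: "nat \<Rightarrow> 'a::real_inner"
  assumes step: "\<And>k. norm (X (Suc k) - X k) \<le> M * (c \<bullet> X k - c \<bullet> X (Suc k))"
    and lim: "X \<longlonglongrightarrow> x"
  shows "norm (X k - x) \<le> M * (c \<bullet> X k - c \<bullet> x)"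
proof -
  have partial: "norm (X N - X k) \<le> M * (c \<bullet> X k - c \<bullet> X N)" if "k \<le> N" for N
    using that
  proof (induction N rule: dec_induct)
    case (step N)
    have "norm (X (Suc N) - X k) \<le> norm (X N - X k) + norm (X (Suc N) - X N)"
      using norm_triangle_ineq[of "X N - X k" "X (Suc N) - X N"] by simp
    also have "\<dots> \<le> M * (c \<bullet> X k - c \<bullet> X N) + M * (c \<bullet> X N - c \<bullet> X (Suc N))"
      using step.IH assms(1)[of N] by (rule add_mono)
    finally show ?case by (simp add: algebra_simps)
  qed simp
  have upper: "(\<lambda>N. M * (c \<bullet> X k - c \<bullet> X N)) \<longlonglongrightarrow> M * (c \<bullet> X k - c \<bullet> x)"
    by (intro tendsto_mult tendsto_diff tendsto_inner lim tendsto_const)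
  have lower: "(\<lambda>N. norm (X N - X k)) \<longlonglongrightarrow> norm (x - X k)"
    by (intro tendsto_norm tendsto_diff lim tendsto_const)
  have "norm (x - X k) \<le> M * (c \<bullet> X k - c \<bullet> x)"
    using partial by (intro tendsto_le[OF trivial_limit_sequentially upper lower])
      (auto simp: eventually_sequentially)
  thus ?thesis by (simp add: norm_minus_commute)
qed

lemma sum_abs_component_le:
  fixes z :: "real^'n"
  shows "(\<Sum>i\<in>S. \<bar>z$i\<bar>) \<le> real CARD('n) * norm z"
proof -
  have "(\<Sum>i\<in>S. \<bar>z$i\<bar>) \<le> (\<Sum>i\<in>S. norm z)" by (intro sum_mono component_le_norm_cart)
  also have "\<dots> \<le> real CARD('n) * norm z"
    by (simp add: card_mono mult_right_mono)
  finally show ?thesis .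
qed

lemma gafs_momentum_step:
  assumes "0 \<le> \<beta>"
  shows "\<exists>t\<ge>0. gafs A c \<alpha> \<beta> x0 (Suc (Suc k)) = gafs A c \<alpha> \<beta> x0 (Suc k)
    - as_step A c \<alpha> (gafs A c \<alpha> \<beta> x0 (Suc k)) + t *\<^sub>R (gafs A c \<alpha> \<beta> x0 (Suc k) - gafs A c \<alpha> \<beta> x0 k)"
proof -
  define X where "X = gafs A c \<alpha> \<beta> x0"
  define t where "t = \<beta> / infnorm (matrix_inv (diagv (X (Suc k))) *v (X (Suc k) - X k))"
  have "0 \<le> t" using assms by (simp add: t_def infnorm_pos_le)
  moreover have "X (Suc (Suc k)) = X (Suc k) - as_step A c \<alpha> (X (Suc k)) + t *\<^sub>R (X (Suc k) - X k)"
    by (simp add: X_def t_def Let_def)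
  ultimately show ?thesis unfolding X_def by blast
qed

lemma gafs_norm_le_gap:
  fixes A :: "real^'n^'m"
  assumes rank: "rank A = CARD('m)" and \<alpha>: "0 \<le> \<alpha>" and \<beta>: "0 \<le> \<beta>"
    and pos: "\<forall>k i. 0 < gafs A c \<alpha> \<beta> x0 k $ i"
    and gam: "\<forall>k. \<exists>i. 0 < (diagv (gafs A c \<alpha> \<beta> x0 k) *v slack A c (gafs A c \<alpha> \<beta> x0 k)) $ i"
    and lim: "gafs A c \<alpha> \<beta> x0 \<longlonglongrightarrow> xstar"
  obtains M where "M > 0"
    "\<And>k. norm (gafs A c \<alpha> \<beta> x0 k - xstar) \<le> M * (c \<bullet> gafs A c \<alpha> \<beta> x0 k - c \<bullet> xstar)"
proof -
  define X where "X = gafs A c \<alpha> \<beta> x0"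
  obtain M where M: "M > 0" and as_step_bound: "\<And>\<alpha> x. 0 \<le> \<alpha> \<Longrightarrow> \<forall>i. 0 < x$i \<Longrightarrow>
      \<exists>i. 0 < (diagv x *v slack A c x)$i \<Longrightarrow> norm (as_step A c \<alpha> x) \<le> M * (c \<bullet> as_step A c \<alpha> x)"
    using as_step_norm_bound[OF rank] by blast
  have "norm (as_step A c \<alpha> (X k)) \<le> M * (c \<bullet> as_step A c \<alpha> (X k))" for k
    using as_step_bound \<alpha> pos gam unfolding X_def by blast
  hence "norm (X (Suc k) - X k) \<le> M * (c \<bullet> X k - c \<bullet> X (Suc k))" for k
    using gafs_momentum_step[OF \<beta>]
    by (intro momentum_descent_step_bound[where d = "\<lambda>k. as_step A c \<alpha> (X k)"]) (auto simp: X_def)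
  hence "norm (X k - xstar) \<le> M * (c \<bullet> X k - c \<bullet> xstar)" for k
    using lim[folded X_def] by (rule limit_dist_le_of_step_bound)
  thus ?thesis using that M unfolding X_def by blast
qed

lemma gap_bounds_of_norm_le_gap:
  fixes X :: "nat \<Rightarrow> real^'n"
  assumes M: "M > 0" and gap: "\<And>k. norm (X k - xstar) \<le> M * (c \<bullet> X k - c \<bullet> xstar)"
    and nonneg: "\<And>k i. 0 \<le> X k $ i"
  shows "\<exists>\<delta>>0. \<exists>R>0. \<forall>k.
      let xk = X k; gap = c \<bullet> xk - c \<bullet> xstar in
        gap \<ge> norm (xk - xstar) / R
      \<and> gap \<ge> \<delta> * (\<Sum>i\<in>{i. xstar $ i = 0}. xk $ i)
      \<and> gap \<ge> \<delta> * (\<Sum>i\<in>{i. xstar $ i > 0}. \<bar>xk $ i - xstar $ i\<bar>)"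
proof -
  have norm_gap: "norm (X k - xstar) / M \<le> c \<bullet> X k - c \<bullet> xstar" for k
    using gap[of k] M by (simp add: pos_divide_le_eq mult.commute)
  define \<delta> where "\<delta> = 1 / (M * real CARD('n))"
  have \<delta>: "0 < \<delta>" using M by (simp add: \<delta>_def)
  have coord: "\<delta> * (\<Sum>i\<in>S. \<bar>X k $ i - xstar $ i\<bar>) \<le> c \<bullet> X k - c \<bullet> xstar" for S k
  proof -
    have "\<delta> * (\<Sum>i\<in>S. \<bar>(X k - xstar) $ i\<bar>) \<le> \<delta> * (real CARD('n) * norm (X k - xstar))"
      using \<delta> by (intro mult_left_mono sum_abs_component_le) simp
    also have "\<dots> = norm (X k - xstar) / M"
      using M by (simp add: \<delta>_def)
    finally show ?thesis using norm_gap[of k] by simp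
  qed
  have zero_part: "(\<Sum>i\<in>{i. xstar $ i = 0}. X k $ i) = (\<Sum>i\<in>{i. xstar $ i = 0}. \<bar>X k $ i - xstar $ i\<bar>)" for k
    using nonneg by (intro sum.cong) auto
  have "\<forall>k. let xk = X k; gap = c \<bullet> xk - c \<bullet> xstar in
        gap \<ge> norm (xk - xstar) / M
      \<and> gap \<ge> \<delta> * (\<Sum>i\<in>{i. xstar $ i = 0}. xk $ i)
      \<and> gap \<ge> \<delta> * (\<Sum>i\<in>{i. xstar $ i > 0}. \<bar>xk $ i - xstar $ i\<bar>)"
    unfolding Let_def zero_part using norm_gap coord by blast
  with \<delta> M show ?thesis by blast
qed

theorem theorem5:
  fixes A :: "real^'n^'m" and b :: "real^'m" and c :: "real^'n"
    and \<alpha> \<beta> :: real and x0 xstar :: "real^'n"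
  assumes standing: "lp_standing A b c"
    and Q: "(\<alpha>, \<beta>) \<in> Qset"
    and x0_pos: "\<forall>i. 0 < x0 $ i" and x0_feas: "A *v x0 = b"
    and wd_pos: "\<forall>k i. 0 < gafs A c \<alpha> \<beta> x0 k $ i"
    and wd_gam: "\<forall>k. \<exists>i. 0 < (diagv (gafs A c \<alpha> \<beta> x0 k) *v slack A c (gafs A c \<alpha> \<beta> x0 k)) $ i"
    and wd_diff: "\<forall>k. gafs A c \<alpha> \<beta> x0 (Suc k) \<noteq> gafs A c \<alpha> \<beta> x0 k"
    and lim: "gafs A c \<alpha> \<beta> x0 \<longlonglongrightarrow> xstar"
  shows "\<exists>\<delta>>0. \<exists>R>0. \<forall>k.
      let xk = gafs A c \<alpha> \<beta> x0 k; gap = c \<bullet> xk - c \<bullet> xstar in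
        gap \<ge> norm (xk - xstar) / R
      \<and> gap \<ge> \<delta> * (\<Sum>i\<in>{i. xstar $ i = 0}. xk $ i)
      \<and> gap \<ge> \<delta> * (\<Sum>i\<in>{i. xstar $ i > 0}. \<bar>xk $ i - xstar $ i\<bar>)"
proof -
  have rank: "rank A = CARD('m)" using standing by (simp add: lp_standing_def)
  have "0 \<le> \<alpha>" "0 \<le> \<beta>" using Q by (auto simp: Qset_def)
  then obtain M where "M > 0"
    "\<And>k. norm (gafs A c \<alpha> \<beta> x0 k - xstar) \<le> M * (c \<bullet> gafs A c \<alpha> \<beta> x0 k - c \<bullet> xstar)"
    using gafs_norm_le_gap[OF rank _ _ wd_pos wd_gam lim] by blast
  moreover have "\<And>k i. 0 \<le> gafs A c \<alpha> \<beta> x0 k $ i" using wd_pos less_imp_le by blast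
  ultimately show ?thesis by (rule gap_bounds_of_norm_le_gap)
qed

end
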